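(* Let $p\ge 1$, let $\mathcal H$ be a finite set of hidden neurons with $H=|\mathcal H|$, and let $B\in\mathbb{R}^{p\times H}$ be the neuron/parameter incidence matrix described in the context. Let $g\in\mathbb{R}^p$ with $g_i>0$ for all $i$, and define $$F(u):=p\log\Big(\sum_{i=1}^p e^{(Bu)_i}g_i\Big)-\sum_{i=1}^p (Bu)_i,\qquad u\in\mathbb{R}^H.$$ Fix $u\in\mathbb{R}^H$ and a neuron $h$, and set $\rho_{i,h}:=e^{(Bu)_i-B_{ih}u_h}$ for $i=1,\dots,p$. Define $$\mathcal A:=|\mathrm{in}_h|-|\mathrm{out}_h|,\quad \mathcal B:=\sum_{i\in\mathrm{out}_h}\rho_{i,h}g_i,\quad \mathcal C:=\sum_{i\in\mathrm{in}_h}\rho_{i,h}g_i,\quad \mathcal D:=\sum_{i\in\mathrm{other}_h}\rho_{i,h}g_i.$$ Then the polynomial $\mathcal B(\mathcal A+p)X^2+\mathcal A\mathcal D X+\mathcal C(\mathcal A-p)$ has a unique positive root $r_h$, and the one-dimensional problem $\min_{u_h\in\mathbb{R}}F(u_1,\dots,u_h,\dots,u_H)$ (all other coordinates fixed) has a solution given by $u_h=\log(r_h)$.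
   Context: Let $\mathcal G=(V,E)$ be a finite directed acyclic graph. For $v\in V$, $\mathrm{ant}(v)=\{u:(u,v)\in E\}$, $\mathrm{suc}(v)=\{u:(v,u)\in E\}$. Input neurons are those with no antecedents, output neurons those with no successors, and hidden neurons $\mathcal H$ are the remaining ones. The parameter vector $\theta\in\mathbb{R}^p$ consists of one weight $\theta_{u\to v}$ per edge $(u,v)\in E$ and one bias $b_v$ per non-input neuron $v$, indexed in a fixed order. For a hidden neuron $h$: $\mathrm{in}_h$ is the set of indices of $b_h$ and of the weights $\theta_{u\to h}$, $u\in\mathrm{ant}(h)$; $\mathrm{out}_h$ is the set of indices of the weights $\theta_{h\to u}$, $u\in\mathrm{suc}(h)$; $\mathrm{other}_h=\{1,\dots,p\}\setminus(\mathrm{in}_h\cup\mathrm{out}_h)$. The matrix $B\in\mathbb{R}^{p\times H}$ has columns indexed by hidden neurons with $B_{ih}=-1$ if $i\in\mathrm{in}_h$, $B_{ih}=1$ if $i\in\mathrm{out}_h$, and $B_{ih}=0$ otherwise. (In the paper $g$ is the diagonal of $\partial\Phi(\theta)^\top\partial\Phi(\theta)$, with $\Phi$ the path-lifting, but the statement only uses $g>0$.) *)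

theory Defs
  imports Complex_Main "HOL-Computational_Algebra.Polynomial"
begin

text \<open>Network: finite DAG with vertex set V and edge set E.
  Parameters are indexed by Inl (u,v) (weight of edge (u,v)) and Inr v (bias of non-input neuron v).\<close>

definition ant :: "('v \<times> 'v) set \<Rightarrow> 'v \<Rightarrow> 'v set" where
  "ant E v = {u. (u, v) \<in> E}"

definition suc :: "('v \<times> 'v) set \<Rightarrow> 'v \<Rightarrow> 'v set" where
  "suc E v = {u. (v, u) \<in> E}"

definition dag :: "'v set \<Rightarrow> ('v \<times> 'v) set \<Rightarrow> bool" where
  "dag V E \<longleftrightarrow> finite V \<and> E \<subseteq> V \<times> V \<and> acyclic E"

definition hidden :: "'v set \<Rightarrow> ('v \<times> 'v) set \<Rightarrow> 'v set" where
  "hidden V E = {v \<in> V. ant E v \<noteq> {} \<and> suc E v \<noteq> {}}"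

definition params :: "'v set \<Rightarrow> ('v \<times> 'v) set \<Rightarrow> (('v \<times> 'v) + 'v) set" where
  "params V E = Inl ` E \<union> Inr ` {v \<in> V. ant E v \<noteq> {}}"

definition in_idx :: "('v \<times> 'v) set \<Rightarrow> 'v \<Rightarrow> (('v \<times> 'v) + 'v) set" where
  "in_idx E h = {Inr h} \<union> {Inl (u, h) | u. u \<in> ant E h}"

definition out_idx :: "('v \<times> 'v) set \<Rightarrow> 'v \<Rightarrow> (('v \<times> 'v) + 'v) set" where
  "out_idx E h = {Inl (h, u) | u. u \<in> suc E h}"

definition other_idx :: "'v set \<Rightarrow> ('v \<times> 'v) set \<Rightarrow> 'v \<Rightarrow> (('v \<times> 'v) + 'v) set" where
  "other_idx V E h = params V E - (in_idx E h \<union> out_idx E h)"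

definition Bmat :: "('v \<times> 'v) set \<Rightarrow> (('v \<times> 'v) + 'v) \<Rightarrow> 'v \<Rightarrow> real" where
  "Bmat E i h = (if i \<in> in_idx E h then -1 else if i \<in> out_idx E h then 1 else 0)"

definition Bu :: "'v set \<Rightarrow> ('v \<times> 'v) set \<Rightarrow> ('v \<Rightarrow> real) \<Rightarrow> (('v \<times> 'v) + 'v) \<Rightarrow> real" where
  "Bu V E u i = (\<Sum>h\<in>hidden V E. Bmat E i h * u h)"

definition Fobj :: "'v set \<Rightarrow> ('v \<times> 'v) set \<Rightarrow> ((('v \<times> 'v) + 'v) \<Rightarrow> real) \<Rightarrow> ('v \<Rightarrow> real) \<Rightarrow> real" where
  "Fobj V E g u = real (card (params V E)) * ln (\<Sum>i\<in>params V E. exp (Bu V E u i) * g i)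
                  - (\<Sum>i\<in>params V E. Bu V E u i)"

definition rho :: "'v set \<Rightarrow> ('v \<times> 'v) set \<Rightarrow> ('v \<Rightarrow> real) \<Rightarrow> 'v \<Rightarrow> (('v \<times> 'v) + 'v) \<Rightarrow> real" where
  "rho V E u h i = exp (Bu V E u i - Bmat E i h * u h)"

end

theory Submission
  imports Defs "HOL-Library.Quadratic_Discriminant"
begin

(* Column h of B is -1 on in_h, +1 on out_h and 0 elsewhere, so as a function of t = u_h the
   objective is p ln (Bc e^t + C e^-t + D) + A t plus a constant. Its derivative is
   Q(e^t) / (Bc e^2t + D e^t + C), where Q is the quadratic of the statement. Because in_h and
   out_h are disjoint, nonempty subsets of the p parameters, |A| < p, so Q has positive leading
   and negative constant coefficient: it has exactly one positive root r, is negative on (0, r)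
   and positive beyond. Hence the derivative changes sign from - to + at ln r, the minimiser. *)

lemma sgn_quadratic_at_pos_root:
  fixes a b c r x :: real
  assumes "a > 0" "c < 0" "r > 0" "poly [:c, b, a:] r = 0" "x > 0"
  shows "sgn (poly [:c, b, a:] x) = sgn (x - r)"
proof -
  have root: "a * r^2 + b * r + c = 0"
    using assms(4) by (simp add: power2_eq_square algebra_simps)
  have "r * (a * r + b) = - c"
    using root by (simp add: power2_eq_square algebra_simps)
  then have "a * r + b > 0"
    using assms(2,3) zero_less_mult_iff[of r "a * r + b"] by linarith
  then have "a * x + a * r + b > 0"
    using assms(1,5) mult_pos_pos[of a x] by linarith
  moreover have "poly [:c, b, a:] x = (x - r) * (a * x + a * r + b)"
    using root by (simp add: power2_eq_square algebra_simps)
  ultimately show ?thesis by (simp add: sgn_mult)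
qed

lemma quadratic_ex1_pos_root:
  fixes a b c :: real
  assumes "a > 0" "c < 0"
  shows "\<exists>!r. r > 0 \<and> poly [:c, b, a:] r = 0"
proof -
  have "a * c < 0" using assms by (simp add: mult_pos_neg)
  then have "discrim a b c > b^2" unfolding discrim_def by linarith
  then have "sqrt (discrim a b c) > b" by (rule real_less_rsqrt)
  define r where "r = (- b + sqrt (discrim a b c)) / (2 * a)"
  have "r > 0"
    using \<open>sqrt (discrim a b c) > b\<close> assms(1) by (simp add: r_def)
  moreover have "a * r^2 + b * r + c = 0"
  proof -
    have "discrim a b c \<ge> 0"
      using \<open>discrim a b c > b^2\<close> zero_le_power2[of b] by linarith
    then show ?thesis
      using discriminant_nonneg[of a b c r] assms(1) by (simp add: r_def)
  qed
  then have "poly [:c, b, a:] r = 0"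
    by (simp add: power2_eq_square algebra_simps)
  moreover have "s = r" if "s > 0" "poly [:c, b, a:] s = 0" for s
    using sgn_quadratic_at_pos_root[OF assms \<open>r > 0\<close> \<open>poly [:c, b, a:] r = 0\<close> \<open>s > 0\<close>]
      that(2)
    by (simp add: sgn_0_0)
  ultimately show ?thesis by blast
qed

lemma DERIV_sign_change_imp_minimum:
  fixes f f' :: "real \<Rightarrow> real"
  assumes "\<And>x. DERIV f x :> f' x"
    and "\<And>x. x \<le> m \<Longrightarrow> f' x \<le> 0"
    and "\<And>x. m \<le> x \<Longrightarrow> f' x \<ge> 0"
  shows "f m \<le> f t"
proof (cases "t \<le> m")
  case True
  then show ?thesis
    by (rule DERIV_nonpos_imp_nonincreasing) (use assms(1,2) in blast)
next
  case False
  then have "m \<le> t" by simp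
  then show ?thesis
    by (rule DERIV_nonneg_imp_nondecreasing) (use assms(1,3) in blast)
qed

definition Fobj_slice :: "real \<Rightarrow> real \<Rightarrow> real \<Rightarrow> real \<Rightarrow> real \<Rightarrow> real \<Rightarrow> real" where
  "Fobj_slice p A Bc C D t = p * ln (Bc * exp t + C * exp (- t) + D) + A * t"

lemma DERIV_Fobj_slice:
  fixes p A Bc C D x :: real
  assumes "Bc \<ge> 0" "C > 0" "D \<ge> 0"
  shows "DERIV (Fobj_slice p A Bc C D) x :>
           poly [:C * (A - p), A * D, Bc * (A + p):] (exp x) / (Bc * (exp x)^2 + D * exp x + C)"
proof -
  define e where "e = exp x"
  define N where "N = Bc * e^2 + D * e + C"
  have "e > 0" by (simp add: e_def)
  have "N > 0"
    using assms \<open>e > 0\<close> by (simp add: N_def add_nonneg_pos)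
  have "Bc * exp x + C * exp (- x) + D > 0"
    using assms by (simp add: add_nonneg_pos add_pos_nonneg)
  then have "DERIV (Fobj_slice p A Bc C D) x :>
          p * ((Bc * exp x - C * exp (- x)) / (Bc * exp x + C * exp (- x) + D)) + A"
    unfolding Fobj_slice_def[abs_def] by (auto intro!: derivative_eq_intros)
  also have "exp (- x) = 1 / e"
    by (simp add: e_def exp_minus inverse_eq_divide)
  also have "Bc * exp x + C * (1 / e) + D = N / e"
    using \<open>e > 0\<close> by (simp add: e_def N_def field_simps power2_eq_square)
  also have "Bc * exp x - C * (1 / e) = (Bc * e^2 - C) / e"
    using \<open>e > 0\<close> by (simp add: e_def field_simps power2_eq_square)
  also have "p * ((Bc * e^2 - C) / e / (N / e)) + A = (p * (Bc * e^2 - C) + A * N) / N"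
    using \<open>e > 0\<close> \<open>N > 0\<close> by (simp add: field_simps)
  also have "\<dots> = poly [:C * (A - p), A * D, Bc * (A + p):] e / N"
    by (simp add: N_def algebra_simps power2_eq_square)
  finally show ?thesis by (simp add: e_def N_def)
qed

lemma Fobj_slice_min_at_ln_root:
  fixes p A Bc C D r t :: real
  assumes "Bc > 0" "C > 0" "D \<ge> 0" "A + p > 0" "A - p < 0"
    and "r > 0" "poly [:C * (A - p), A * D, Bc * (A + p):] r = 0"
  shows "Fobj_slice p A Bc C D (ln r) \<le> Fobj_slice p A Bc C D t"
proof -
  let ?Q = "[:C * (A - p), A * D, Bc * (A + p):]"
  let ?\<phi>' = "\<lambda>x. poly ?Q (exp x) / (Bc * (exp x)^2 + D * exp x + C)"
  have "Bc * (A + p) > 0" "C * (A - p) < 0"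
    using assms(1-5) by (simp_all add: mult_pos_neg)
  note sgn_Q = sgn_quadratic_at_pos_root[OF this assms(6,7)]
  have den_pos: "Bc * (exp x)^2 + D * exp x + C > 0" for x
    using assms(1-3) by (simp add: add_nonneg_pos)
  show ?thesis
  proof (rule DERIV_sign_change_imp_minimum[where f = "Fobj_slice p A Bc C D" and f' = ?\<phi>'])
    show "DERIV (Fobj_slice p A Bc C D) x :> ?\<phi>' x" for x
      using assms(1-3) by (intro DERIV_Fobj_slice) simp_all
    show "?\<phi>' x \<le> 0" if "x \<le> ln r" for x
    proof -
      have "exp x \<le> r" using that assms(6) by (metis exp_le_cancel_iff exp_ln)
      then have "sgn (poly ?Q (exp x)) \<le> 0" using sgn_Q[of "exp x"] by simp
      then have "poly ?Q (exp x) \<le> 0" by (simp only: sgn_le_0_iff)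
      then show ?thesis using den_pos[of x] by (simp add: divide_nonpos_pos)
    qed
    show "?\<phi>' x \<ge> 0" if "ln r \<le> x" for x
    proof -
      have "r \<le> exp x" using that assms(6) by (metis exp_le_cancel_iff exp_ln)
      then have "sgn (poly ?Q (exp x)) \<ge> 0" using sgn_Q[of "exp x"] by simp
      then have "poly ?Q (exp x) \<ge> 0" by (simp only: zero_le_sgn_iff)
      then show ?thesis using den_pos[of x] by simp
    qed
  qed
qed

lemma finite_params:
  assumes "dag V E"
  shows "finite (params V E)"
proof -
  have "finite E"
    using assms unfolding dag_def by (meson finite_SigmaI finite_subset)
  then show ?thesis
    using assms unfolding dag_def params_def by auto
qed

lemma finite_hidden: "finite V \<Longrightarrow> finite (hidden V E)"
  unfolding hidden_def by simp

lemma in_idx_nonempty: "in_idx E h \<noteq> {}"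
  unfolding in_idx_def by simp

lemma in_idx_subset_params: "h \<in> hidden V E \<Longrightarrow> in_idx E h \<subseteq> params V E"
  unfolding hidden_def in_idx_def params_def ant_def by auto

lemma out_idx_subset_params: "out_idx E h \<subseteq> params V E"
  unfolding out_idx_def params_def suc_def by auto

lemma out_idx_nonempty: "h \<in> hidden V E \<Longrightarrow> out_idx E h \<noteq> {}"
  unfolding hidden_def out_idx_def by auto

lemma in_out_idx_disjoint: "(h, h) \<notin> E \<Longrightarrow> in_idx E h \<inter> out_idx E h = {}"
  unfolding in_idx_def out_idx_def ant_def suc_def by auto

lemma dag_no_self_loop: "dag V E \<Longrightarrow> (h, h) \<notin> E"
  unfolding dag_def acyclic_def by auto

lemma sum_params_split:
  assumes "dag V E" "h \<in> hidden V E"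
  shows "sum f (params V E) = sum f (in_idx E h) + sum f (out_idx E h) + sum f (other_idx V E h)"
proof -
  have fin: "finite (params V E)" using assms(1) by (rule finite_params)
  have sub: "in_idx E h \<union> out_idx E h \<subseteq> params V E"
    using in_idx_subset_params[OF assms(2)] out_idx_subset_params[of E h V] by blast
  have "sum f (params V E) = sum f (other_idx V E h) + sum f (in_idx E h \<union> out_idx E h)"
    unfolding other_idx_def using sub fin by (rule sum.subset_diff)
  also have "sum f (in_idx E h \<union> out_idx E h) = sum f (in_idx E h) + sum f (out_idx E h)"
    using fin sub in_out_idx_disjoint[OF dag_no_self_loop[OF assms(1)]]
    by (intro sum.union_disjoint) (auto intro: finite_subset)
  finally show ?thesis by (simp add: ac_simps)
qed

lemma card_in_out_idx_le:
  assumes "dag V E" "h \<in> hidden V E"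
  shows "card (in_idx E h) + card (out_idx E h) \<le> card (params V E)"
  unfolding card_eq_sum using sum_params_split[OF assms, of "\<lambda>_. 1 :: nat"] by linarith

lemma card_in_idx_pos:
  assumes "dag V E" "h \<in> hidden V E"
  shows "card (in_idx E h) > 0"
  using finite_params[OF assms(1)] in_idx_subset_params[OF assms(2)] in_idx_nonempty[of E h]
  by (auto simp: card_gt_0_iff intro: finite_subset)

lemma card_out_idx_pos:
  assumes "dag V E" "h \<in> hidden V E"
  shows "card (out_idx E h) > 0"
  using finite_params[OF assms(1)] out_idx_subset_params[of E h V] out_idx_nonempty[OF assms(2)]
  by (auto simp: card_gt_0_iff intro: finite_subset)

lemma sum_rho_pos:
  assumes "dag V E" "\<forall>i\<in>params V E. g i > 0" "S \<subseteq> params V E" "S \<noteq> {}"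
  shows "(\<Sum>i\<in>S. rho V E u h i * g i) > 0"
  using assms finite_params[OF assms(1)] by (intro sum_pos) (auto simp: rho_def intro: finite_subset)

lemma sum_rho_nonneg:
  assumes "\<forall>i\<in>params V E. g i > 0" "S \<subseteq> params V E"
  shows "(\<Sum>i\<in>S. rho V E u h i * g i) \<ge> 0"
  using assms by (intro sum_nonneg) (auto simp: rho_def less_imp_le)

lemma Bmat_in_idx: "i \<in> in_idx E h \<Longrightarrow> Bmat E i h = -1"
  unfolding Bmat_def by simp

lemma Bmat_out_idx:
  assumes "(h, h) \<notin> E" "i \<in> out_idx E h"
  shows "Bmat E i h = 1"
proof -
  have "i \<notin> in_idx E h" using in_out_idx_disjoint[OF assms(1)] assms(2) by blast
  then show ?thesis using assms(2) by (simp add: Bmat_def)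
qed

lemma Bmat_other_idx: "i \<in> other_idx V E h \<Longrightarrow> Bmat E i h = 0"
  unfolding Bmat_def other_idx_def by simp

lemma Bu_fun_upd:
  assumes "finite V" "h \<in> hidden V E"
  shows "Bu V E (u(h := t)) i = Bu V E u i + Bmat E i h * (t - u h)"
proof -
  have "Bu V E w i = Bmat E i h * w h + (\<Sum>h'\<in>hidden V E - {h}. Bmat E i h' * w h')" for w
    unfolding Bu_def using finite_hidden[OF assms(1)] assms(2) by (rule sum.remove)
  then show ?thesis by (simp add: algebra_simps)
qed

lemma exp_Bu_fun_upd:
  assumes "finite V" "h \<in> hidden V E"
  shows "exp (Bu V E (u(h := t)) i) = rho V E u h i * exp (Bmat E i h * t)"
  unfolding Bu_fun_upd[OF assms] rho_def by (simp add: algebra_simps flip: exp_add)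

lemma Fobj_fun_upd_eq_Fobj_slice:
  fixes g :: "('v \<times> 'v) + 'v \<Rightarrow> real" and u :: "'v \<Rightarrow> real"
  assumes "dag V E" "h \<in> hidden V E"
  defines "p \<equiv> real (card (params V E))"
    and "A \<equiv> real (card (in_idx E h)) - real (card (out_idx E h))"
    and "Bc \<equiv> (\<Sum>i\<in>out_idx E h. rho V E u h i * g i)"
    and "C \<equiv> (\<Sum>i\<in>in_idx E h. rho V E u h i * g i)"
    and "D \<equiv> (\<Sum>i\<in>other_idx V E h. rho V E u h i * g i)"
  shows "Fobj V E g (u(h := t)) = Fobj_slice p A Bc C D t - (A * u h + (\<Sum>i\<in>params V E. Bu V E u i))"
proof -
  have "finite V" using assms(1) by (simp add: dag_def)
  note no_loop = dag_no_self_loop[OF assms(1)]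
  note split = sum_params_split[OF assms(1,2)]
  have "(\<Sum>i\<in>params V E. exp (Bu V E (u(h := t)) i) * g i)
      = (\<Sum>i\<in>params V E. rho V E u h i * g i * exp (Bmat E i h * t))"
    by (simp add: exp_Bu_fun_upd[OF \<open>finite V\<close> assms(2)] ac_simps)
  also have "\<dots> = C * exp (- t) + Bc * exp t + D"
    unfolding split C_def Bc_def D_def sum_distrib_right
    by (simp add: Bmat_in_idx Bmat_out_idx[OF no_loop] Bmat_other_idx cong: sum.cong)
  finally have exp_sum:
    "(\<Sum>i\<in>params V E. exp (Bu V E (u(h := t)) i) * g i) = Bc * exp t + C * exp (- t) + D"
    by simp
  have Bmat_sum: "(\<Sum>i\<in>params V E. Bmat E i h) = - A"
    unfolding split A_def
    by (simp add: Bmat_in_idx Bmat_out_idx[OF no_loop] Bmat_other_idx cong: sum.cong)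
  have "(\<Sum>i\<in>params V E. Bu V E (u(h := t)) i)
      = (\<Sum>i\<in>params V E. Bu V E u i) + (\<Sum>i\<in>params V E. Bmat E i h) * (t - u h)"
    by (simp add: Bu_fun_upd[OF \<open>finite V\<close> assms(2)] sum.distrib sum_distrib_right)
  also have "\<dots> = (\<Sum>i\<in>params V E. Bu V E u i) - A * (t - u h)"
    by (simp add: Bmat_sum)
  finally have lin_sum:
    "(\<Sum>i\<in>params V E. Bu V E (u(h := t)) i) = (\<Sum>i\<in>params V E. Bu V E u i) - A * (t - u h)" .
  show ?thesis
    unfolding Fobj_def Fobj_slice_def exp_sum lin_sum p_def by (simp add: algebra_simps)
qed

theorem lemma4p1:
  fixes V :: "'v set" and E :: "('v \<times> 'v) set"
    and g :: "(('v \<times> 'v) + 'v) \<Rightarrow> real" and u :: "'v \<Rightarrow> real" and h :: 'v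
  assumes "dag V E"
    and "card (params V E) \<ge> 1"
    and "\<forall>i\<in>params V E. g i > 0"
    and "h \<in> hidden V E"
  defines "p \<equiv> real (card (params V E))"
    and "A \<equiv> real (card (in_idx E h)) - real (card (out_idx E h))"
    and "Bc \<equiv> (\<Sum>i\<in>out_idx E h. rho V E u h i * g i)"
    and "C \<equiv> (\<Sum>i\<in>in_idx E h. rho V E u h i * g i)"
    and "D \<equiv> (\<Sum>i\<in>other_idx V E h. rho V E u h i * g i)"
  shows "(\<exists>!r. r > 0 \<and> poly [: C * (A - p), A * D, Bc * (A + p) :] r = 0)
       \<and> (\<forall>r. r > 0 \<and> poly [: C * (A - p), A * D, Bc * (A + p) :] r = 0 \<longrightarrow>
              (\<forall>t. Fobj V E g (u(h := ln r)) \<le> Fobj V E g (u(h := t))))"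
proof -
  have "Bc > 0"
    unfolding Bc_def using assms(1,3) out_idx_subset_params out_idx_nonempty[OF assms(4)]
    by (rule sum_rho_pos)
  have "C > 0"
    unfolding C_def using assms(1,3) in_idx_subset_params[OF assms(4)] in_idx_nonempty
    by (rule sum_rho_pos)
  have "D \<ge> 0"
    unfolding D_def using assms(3) by (rule sum_rho_nonneg) (auto simp: other_idx_def)
  have "A + p > 0" "A - p < 0"
    using card_in_out_idx_le[OF assms(1,4)] card_in_idx_pos[OF assms(1,4)] card_out_idx_pos[OF assms(1,4)]
    unfolding A_def p_def by linarith+
  show ?thesis
  proof (intro conjI allI impI)
    show "\<exists>!r. r > 0 \<and> poly [: C * (A - p), A * D, Bc * (A + p) :] r = 0"
      using \<open>Bc > 0\<close> \<open>C > 0\<close> \<open>A + p > 0\<close> \<open>A - p < 0\<close>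
      by (intro quadratic_ex1_pos_root) (simp_all add: mult_pos_neg)
    show "Fobj V E g (u(h := ln r)) \<le> Fobj V E g (u(h := t))"
      if "r > 0 \<and> poly [: C * (A - p), A * D, Bc * (A + p) :] r = 0" for r t
      using Fobj_slice_min_at_ln_root[OF \<open>Bc > 0\<close> \<open>C > 0\<close> \<open>D \<ge> 0\<close>
          \<open>A + p > 0\<close> \<open>A - p < 0\<close>] that
      unfolding Fobj_fun_upd_eq_Fobj_slice[OF assms(1,4), of g u, folded p_def A_def Bc_def C_def D_def]
      by simp
  qed
qed

end
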